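(* Let $\mathbf{X}\in\mathbb{R}^{m\times n}$, let $\Theta\subseteq[m]\times[n]$ be an index set of observed entries, let $\gamma_r,\gamma_c\ge 0$, and let $\mathcal{E}_r\subseteq[m]\times[m]$ and $\mathcal{E}_c\subseteq[n]\times[n]$ be edge sets of a row graph and a column graph. Assume: (A1) the graphs $\mathcal{E}_r$ (on vertex set $[m]$) and $\mathcal{E}_c$ (on vertex set $[n]$) are connected, i.e. for any two distinct rows $i\neq j$ there is a sequence $i\to k\to\cdots\to l\to j$ with $(i,k),\ldots,(l,j)\in\mathcal{E}_r$, and analogously for columns with $\mathcal{E}_c$; (A2) the function $\Omega:[0,\infty)\to[0,\infty)$ is concave and continuously differentiable on $(0,\infty)$, satisfies $\Omega(0)=0$, is increasing on $[0,\infty)$, and has finite directional (right) derivative at the origin. Consider the objective $$f(\mathbf{U})=\tfrac12\lVert \mathcal{P}_\Theta(\mathbf{X})-\mathcal{P}_\Theta(\mathbf{U})\rVert_F^2+\gamma_r\sum_{(i,j)\in\mathcal{E}_r}\Omega(\lVert \mathbf{U}_{i\cdot}-\mathbf{U}_{j\cdot}\rVert_2)+\gamma_c\sum_{(i,j)\in\mathcal{E}_c}\Omega(\lVert \mathbf{U}_{\cdot i}-\mathbf{U}_{\cdot j}\rVert_2),\qquad \mathbf{U}\in\mathbb{R}^{m\times n}.$$ Starting from any $\mathbf{U}_0\in\mathbb{R}^{m\times n}$, define the sequence $(\mathbf{U}_t)_{t\ge0}$ by $$\mathbf{U}_{t+1}=\arg\min_{\mathbf{U}}\ \tfrac12\lVert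 \tilde{\mathbf{X}}_t-\mathbf{U}\rVert_F^2+\gamma_r\sum_{(i,j)\in\mathcal{E}_r}w^{(t)}_{r,ij}\lVert \mathbf{U}_{i\cdot}-\mathbf{U}_{j\cdot}\rVert_2+\gamma_c\sum_{(i,j)\in\mathcal{E}_c}w^{(t)}_{c,ij}\lVert \mathbf{U}_{\cdot i}-\mathbf{U}_{\cdot j}\rVert_2,$$ where $\tilde{\mathbf{X}}_t=\mathcal{P}_\Theta(\mathbf{X})+\mathcal{P}_{\Theta^c}(\mathbf{U}_t)$, $w^{(t)}_{r,ij}=\Omega'(\lVert (\mathbf{U}_t)_{i\cdot}-(\mathbf{U}_t)_{j\cdot}\rVert_2)$ and $w^{(t)}_{c,ij}=\Omega'(\lVert (\mathbf{U}_t)_{\cdot i}-(\mathbf{U}_t)_{\cdot j}\rVert_2)$ (the minimizer is unique since the objective is strongly convex). Then the sequence $(\mathbf{U}_t)$ has at least one limit point, and every limit point is a stationary point of $f$.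
   Context: For a matrix $\mathbf{U}$, $\mathbf{U}_{i\cdot}$ denotes its $i$th row and $\mathbf{U}_{\cdot i}$ its $i$th column; $[m]=\{1,\dots,m\}$. $\mathcal{P}_\Theta$ is the projection onto the index set $\Theta$: $[\mathcal{P}_\Theta(\mathbf{X})]_{ij}=X_{ij}$ if $(i,j)\in\Theta$ and $0$ otherwise; $\Theta^c$ is the complement of $\Theta$ in $[m]\times[n]$. $\Omega'(0)$ denotes the right derivative of $\Omega$ at $0$. A point $\mathbf{U}$ is a stationary point of $f$ if the directional derivative $f'(\mathbf{U};\mathbf{V})\ge 0$ for every direction $\mathbf{V}\in\mathbb{R}^{m\times n}$. *)

theory Defs
  imports "HOL-Analysis.Analysis"
begin

text \<open>Matrices in R^{m x n} are elements of real^'n^'m; row i is U $ i,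
  column j is column j U. The norm on real^'n^'m is the Frobenius norm.\<close>

definition proj :: "('m \<times> 'n) set \<Rightarrow> real^'n^'m \<Rightarrow> real^'n^'m" where
  "proj \<Theta> X = (\<chi> i j. if (i, j) \<in> \<Theta> then X $ i $ j else 0)"

definition objective ::
  "real^'n^'m \<Rightarrow> ('m \<times> 'n) set \<Rightarrow> real \<Rightarrow> real \<Rightarrow> ('m \<times> 'm) set \<Rightarrow> ('n \<times> 'n) set
   \<Rightarrow> (real \<Rightarrow> real) \<Rightarrow> real^'n^'m \<Rightarrow> real" where
  "objective X \<Theta> \<gamma>r \<gamma>c Er Ec \<Omega> U =
     (1/2) * (norm (proj \<Theta> X - proj \<Theta> U))\<^sup>2
     + \<gamma>r * (\<Sum>(i, j)\<in>Er. \<Omega> (norm (U $ i - U $ j)))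
     + \<gamma>c * (\<Sum>(i, j)\<in>Ec. \<Omega> (norm (column i U - column j U)))"

definition surrogate ::
  "real^'n^'m \<Rightarrow> ('m \<times> 'n) set \<Rightarrow> real \<Rightarrow> real \<Rightarrow> ('m \<times> 'm) set \<Rightarrow> ('n \<times> 'n) set
   \<Rightarrow> (real \<Rightarrow> real) \<Rightarrow> real^'n^'m \<Rightarrow> real^'n^'m \<Rightarrow> real" where
  "surrogate X \<Theta> \<gamma>r \<gamma>c Er Ec d\<Omega> Ut U =
     (let Xt = proj \<Theta> X + proj (- \<Theta>) Ut in
     (1/2) * (norm (Xt - U))\<^sup>2
     + \<gamma>r * (\<Sum>(i, j)\<in>Er. d\<Omega> (norm (Ut $ i - Ut $ j)) * norm (U $ i - U $ j))
     + \<gamma>c * (\<Sum>(i, j)\<in>Ec. d\<Omega> (norm (column i Ut - column j Ut)) * norm (column i U - column j U)))"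

definition has_dir_deriv :: "('a::real_vector \<Rightarrow> real) \<Rightarrow> 'a \<Rightarrow> 'a \<Rightarrow> real \<Rightarrow> bool" where
  "has_dir_deriv f U V d \<longleftrightarrow> ((\<lambda>\<tau>. (f (U + \<tau> *\<^sub>R V) - f U) / \<tau>) \<longlongrightarrow> d) (at_right 0)"

definition stationary_point :: "('a::real_vector \<Rightarrow> real) \<Rightarrow> 'a \<Rightarrow> bool" where
  "stationary_point f U \<longleftrightarrow> (\<forall>V. \<exists>d. has_dir_deriv f U V d \<and> d \<ge> 0)"

definition limit_point :: "(nat \<Rightarrow> 'a::topological_space) \<Rightarrow> 'a \<Rightarrow> bool" where
  "limit_point s L \<longleftrightarrow> (\<exists>r. strict_mono r \<and> (s \<circ> r) \<longlonglongrightarrow> L)"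

end

theory Submission
  imports Defs
begin

text \<open>
  Concavity of \<open>\<Omega>\<close> makes \<open>W \<mapsto> f V + (S V W - S V V)\<close>, with \<open>S V\<close> the surrogate built
  at \<open>V\<close>, a majorizer of the objective \<open>f\<close> that touches it at \<open>V\<close>: the penalties are bounded
  by their tangent lines at the current differences, and the data term only grows when the
  unobserved entries of \<open>X\<close> are replaced by those of \<open>V\<close>. Hence \<open>f\<close> decreases along the
  iterates, and by continuity every limit point \<open>L\<close> minimizes its own surrogate \<open>S L\<close>.
  Since \<open>f\<close> and \<open>S L\<close> have the same one-sided directional derivatives at \<open>L\<close>, these are
  nonnegative. A limit point exists because clipping all entries to \<open>[-M, M]\<close>, where the box
  contains \<open>X\<close> and \<open>U 0\<close>, strictly decreases the surrogate of an iterate that leaves the box.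
\<close>

section \<open>Concave functions on a half-line\<close>

context
  fixes f f' :: "real \<Rightarrow> real" and a :: real
  assumes concave: "concave_on {a..} f"
    and deriv: "\<And>x. a \<le> x \<Longrightarrow> (f has_real_derivative f' x) (at x within {a..})"
begin

lemma concave_on_Ici_below_tangent:
  assumes c: "a \<le> c" and x: "a \<le> x"
  shows "f x \<le> f c + f' c * (x - c)"
proof (cases x c rule: linorder_cases)
  case less
  have "- f x - - f c \<ge> - f' c * (x - c)"
  proof (rule convex_on_imp_above_tangent)
    show "convex_on {a..} (\<lambda>x. - f x)" using concave by (simp add: concave_on_def)
    show "((\<lambda>x. - f x) has_real_derivative - f' c) (at c within {a..})"
      using deriv[OF c] by (rule DERIV_minus)
  qed (use less x in auto)
  then show ?thesis by (simp add: algebra_simps)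
next
  case greater
  have "((\<lambda>y. (f y - f c) / (y - c)) \<longlongrightarrow> f' c) (at_right c)"
    using deriv[OF c] unfolding has_field_derivative_iff
    by (rule tendsto_within_subset) (use c in auto)
  moreover have "\<forall>\<^sub>F y in at_right c. (f x - f c) / (x - c) \<le> (f y - f c) / (y - c)"
    using eventually_at_right_real[OF greater]
  proof eventually_elim
    case (elim y)
    have "concave_on {c..x} f"
      using concave unfolding concave_on_def by (rule convex_on_subset) (use c in auto)
    then have "(f x - f c) / (x - c) * (y - c) + f c \<le> f y"
      by (rule concave_onD_Icc') (use elim in auto)
    then show ?case using elim by (simp add: field_simps)
  qed
  ultimately have "(f x - f c) / (x - c) \<le> f' c"
    by (rule tendsto_lowerbound) simp
  then show ?thesis using greater by (simp add: field_simps)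
qed simp

lemma concave_on_Ici_deriv_antimono:
  assumes "a \<le> x" "x \<le> y"
  shows "f' y \<le> f' x"
proof -
  have "f y \<le> f x + f' x * (y - x)" "f x \<le> f y + f' y * (x - y)"
    using assms by (auto intro!: concave_on_Ici_below_tangent)
  then have "0 \<le> (f' x - f' y) * (y - x)" by (simp add: algebra_simps)
  then show ?thesis using assms by (cases "x = y") (auto simp: zero_le_mult_iff)
qed

lemma concave_on_Ici_deriv_nonneg:
  assumes "mono_on {a..} f" "a \<le> x"
  shows "0 \<le> f' x"
proof -
  have "f x \<le> f (x + 1)" using assms by (auto intro: mono_onD)
  also have "\<dots> \<le> f x + f' x" using concave_on_Ici_below_tangent[of x "x + 1"] assms by simp
  finally show ?thesis by simp
qed

lemma concave_on_Ici_deriv_continuous_right: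
  "(f' \<longlongrightarrow> f' a) (at_right a)"
proof (rule order_tendstoI)
  fix b assume "f' a < b"
  have "f' x < b" if "a < x" for x
    using concave_on_Ici_deriv_antimono[of a x] that \<open>f' a < b\<close> by simp
  then show "\<forall>\<^sub>F x in at_right a. f' x < b"
    using eventually_at_right_less by (rule eventually_mono[rotated])
next
  fix b assume "b < f' a"
  have slope: "((\<lambda>y. (f y - f a) / (y - a)) \<longlongrightarrow> f' a) (at_right a)"
    using deriv[of a] by (simp add: has_field_derivative_iff at_within_Ici_at_right)
  obtain y where y: "a < y" "b < (f y - f a) / (y - a)"
    using eventually_happens'[OF _ eventually_conj[OF order_tendstoD(1)[OF slope \<open>b < f' a\<close>]
      eventually_at_right_less]] by auto
  have "continuous_on {a..} f" by (rule DERIV_continuous_on) (use deriv in auto)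
  then have "(f \<longlongrightarrow> f a) (at_right a)"
    by (simp add: continuous_on_def at_within_Ici_at_right[symmetric])
  then have "((\<lambda>x. (f y - f x) / (y - x)) \<longlongrightarrow> (f y - f a) / (y - a)) (at_right a)"
    using y by (intro tendsto_intros) auto
  then have "\<forall>\<^sub>F x in at_right a. b < (f y - f x) / (y - x)"
    using y by (intro order_tendstoD(1)) auto
  then show "\<forall>\<^sub>F x in at_right a. b < f' x"
    using eventually_at_right_real[OF y(1)]
  proof eventually_elim
    case (elim x)
    then have "(f y - f x) / (y - x) \<le> f' x"
      using concave_on_Ici_below_tangent[of x y] by (simp add: field_simps)
    with elim show ?case by simp
  qed
qed

lemma concave_on_Ici_deriv_continuous_on:
  assumes "continuous_on {a<..} f'"
  shows "continuous_on {a..} f'"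
  unfolding continuous_on_eq_continuous_within
proof
  fix x assume "x \<in> {a..}"
  show "continuous (at x within {a..}) f'"
  proof (cases "x = a")
    case True
    then show ?thesis using concave_on_Ici_deriv_continuous_right
      by (simp add: continuous_within at_within_Ici_at_right)
  next
    case False
    with \<open>x \<in> {a..}\<close> assms have "isCont f' x"
      by (simp add: continuous_on_eq_continuous_at)
    then show ?thesis by (rule continuous_at_imp_continuous_within)
  qed
qed

end

section \<open>One-sided derivatives along lines\<close>

definition norm_dir_deriv :: "'a::real_inner \<Rightarrow> 'a \<Rightarrow> real" where
  "norm_dir_deriv a c = (if a = 0 then norm c else c \<bullet> sgn a)"

lemma has_real_derivative_norm_line:
  fixes a c :: "'a::real_inner"
  shows "((\<lambda>\<tau>. norm (a + \<tau> *\<^sub>R c)) has_real_derivative norm_dir_deriv a c) (at 0 within {0..})"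
proof (cases "a = 0")
  case True
  have "((\<lambda>\<tau>. \<tau> * norm c) has_real_derivative norm c) (at 0 within {0..})"
    by (auto intro!: derivative_eq_intros)
  then have "((\<lambda>\<tau>. norm (a + \<tau> *\<^sub>R c)) has_real_derivative norm c) (at 0 within {0..})"
    by (rule has_field_derivative_transform_within[where d=1]) (auto simp: True)
  then show ?thesis by (simp add: True norm_dir_deriv_def)
next
  case False
  have line: "((\<lambda>\<tau>. a + \<tau> *\<^sub>R c) has_derivative (\<lambda>h. h *\<^sub>R c)) (at 0 within {0..})"
    by (auto intro!: derivative_eq_intros)
  have "(norm has_derivative (\<lambda>h. h \<bullet> sgn a)) (at (a + 0 *\<^sub>R c))"
    using has_derivative_norm[OF False] by simp
  from has_derivative_compose[OF line this]
  have "((\<lambda>\<tau>. norm (a + \<tau> *\<^sub>R c)) has_derivative (\<lambda>h. (h *\<^sub>R c) \<bullet> sgn a)) (at 0 within {0..})" .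
  moreover have "(\<lambda>h. (h *\<^sub>R c) \<bullet> sgn a) = (*) (norm_dir_deriv a c)"
    using False by (auto simp: norm_dir_deriv_def)
  ultimately show ?thesis by (simp add: has_field_derivative_def)
qed

lemma has_real_derivative_comp_norm_line:
  fixes a c :: "'a::real_inner"
  assumes deriv: "\<And>x. 0 \<le> x \<Longrightarrow> (\<Omega> has_real_derivative d\<Omega> x) (at x within {0..})"
  shows "((\<lambda>\<tau>. \<Omega> (norm (a + \<tau> *\<^sub>R c))) has_real_derivative d\<Omega> (norm a) * norm_dir_deriv a c)
           (at 0 within {0..})"
proof -
  have "(\<Omega> has_real_derivative d\<Omega> (norm a)) (at (norm (a + 0 *\<^sub>R c)) within {0..})"
    using deriv[of "norm a"] by simp
  then have "(\<Omega> has_real_derivative d\<Omega> (norm a))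
          (at (norm (a + 0 *\<^sub>R c)) within (\<lambda>\<tau>. norm (a + \<tau> *\<^sub>R c)) ` {0..})"
    by (rule has_field_derivative_subset) auto
  from DERIV_image_chain[OF this has_real_derivative_norm_line]
  show ?thesis by (simp add: o_def)
qed

lemma has_real_derivative_half_norm_power2_line:
  fixes A B :: "'a::real_inner"
  shows "((\<lambda>\<tau>. (1/2) * (norm (A - \<tau> *\<^sub>R B))\<^sup>2) has_real_derivative - (A \<bullet> B)) (at 0 within S)"
proof -
  have "(\<lambda>\<tau>. (1/2) * (norm (A - \<tau> *\<^sub>R B))\<^sup>2)
      = (\<lambda>\<tau>. (1/2) * (A \<bullet> A) - \<tau> * (A \<bullet> B) + (1/2) * (\<tau> * \<tau>) * (B \<bullet> B))"
    by (simp add: power2_norm_eq_inner inner_diff_left inner_diff_right inner_commute algebra_simps)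
  then show ?thesis by (auto intro!: derivative_eq_intros)
qed

lemma has_dir_deriv_iff_has_real_derivative:
  "has_dir_deriv f U V d \<longleftrightarrow> ((\<lambda>\<tau>. f (U + \<tau> *\<^sub>R V)) has_real_derivative d) (at 0 within {0..})"
  by (simp add: has_dir_deriv_def has_field_derivative_iff at_within_Ici_at_right)

lemma has_dir_deriv_nonneg_at_min:
  assumes "has_dir_deriv f U V d" and "\<And>W. f U \<le> f W"
  shows "0 \<le> d"
proof -
  have "\<forall>\<^sub>F \<tau> in at_right 0. 0 \<le> (f (U + \<tau> *\<^sub>R V) - f U) / \<tau>"
    using eventually_at_right_less by (rule eventually_mono) (simp add: assms(2))
  with assms(1) show ?thesis
    unfolding has_dir_deriv_def by (intro tendsto_lowerbound) auto
qed

lemma stationary_point_if_tangent_surrogate_minimal: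
  assumes "\<And>V. \<exists>d. has_dir_deriv f L V d \<and> has_dir_deriv g L V d" and "\<And>W. g L \<le> g W"
  shows "stationary_point f L"
  unfolding stationary_point_def using assms has_dir_deriv_nonneg_at_min by metis

section \<open>Majorization-minimization\<close>

lemma mm_objective_decreasing:
  assumes major: "\<And>V W. f W - S V W \<le> f V - S V V"
    and step: "\<And>t W. S (U t) (U (Suc t)) \<le> S (U t) W"
  shows "decseq (\<lambda>t. f (U t) :: real)"
proof (rule decseq_SucI)
  fix t
  have "f (U (Suc t)) \<le> f (U t) + (S (U t) (U (Suc t)) - S (U t) (U t))"
    using major[of "U (Suc t)" "U t"] by simp
  also have "\<dots> \<le> f (U t)" using step[of t "U t"] by simp
  finally show "f (U (Suc t)) \<le> f (U t)" .
qed

lemma mm_limit_point_minimizes_surrogate: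
  fixes f :: "'a::t2_space \<Rightarrow> real"
  assumes major: "\<And>V W. f W - S V W \<le> f V - S V V"
    and step: "\<And>t W. S (U t) (U (Suc t)) \<le> S (U t) W"
    and cont_f: "continuous_on UNIV f"
    and cont_S: "\<And>W. continuous_on UNIV (\<lambda>V. S V W)"
    and cont_S_diag: "continuous_on UNIV (\<lambda>V. S V V)"
    and L: "limit_point U L"
  shows "S L L \<le> S L W"
proof -
  from L obtain r where r: "strict_mono r" and Ur: "(\<lambda>k. U (r k)) \<longlonglongrightarrow> L"
    by (auto simp: limit_point_def o_def)
  have cont: "isCont (\<lambda>V. f V + (S V W - S V V)) L"
    using cont_f cont_S cont_S_diag by (auto simp: continuous_on_eq_continuous_at intro!: continuous_intros)
  have dec: "decseq (\<lambda>t. f (U t))" using major step by (rule mm_objective_decreasing)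
  have "(\<lambda>k. f (U (r k))) \<longlonglongrightarrow> f L"
    using cont_f by (intro isCont_tendsto_compose[OF _ Ur]) (simp add: continuous_on_eq_continuous_at)
  moreover have "f (U (r k)) \<le> f (U t)" if "t \<le> k" for t k
    using dec seq_suble[OF r, of k] that by (simp add: decseq_def)
  ultimately have below: "f L \<le> f (U t)" for t
    by (intro LIMSEQ_le_const2) auto
  have "f L \<le> f (U (r k)) + (S (U (r k)) W - S (U (r k)) (U (r k)))" for k
  proof -
    have "f L \<le> f (U (Suc (r k)))" by (rule below)
    also have "\<dots> \<le> f (U (r k)) + (S (U (r k)) (U (Suc (r k))) - S (U (r k)) (U (r k)))"
      using major[of "U (Suc (r k))" "U (r k)"] by simp
    also have "\<dots> \<le> f (U (r k)) + (S (U (r k)) W - S (U (r k)) (U (r k)))"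
      using step[of "r k" W] by simp
    finally show ?thesis .
  qed
  moreover have "(\<lambda>k. f (U (r k)) + (S (U (r k)) W - S (U (r k)) (U (r k)))) \<longlonglongrightarrow> f L + (S L W - S L L)"
    using cont Ur by (rule isCont_tendsto_compose)
  ultimately have "f L \<le> f L + (S L W - S L L)"
    by (intro LIMSEQ_le_const) auto
  then show ?thesis by simp
qed

section \<open>The matrix completion objective and its surrogate\<close>

lemma proj_nth [simp]: "proj \<Theta> A $ i $ j = (if (i, j) \<in> \<Theta> then A $ i $ j else 0)"
  by (simp add: proj_def)

lemma row_diff_add_scaleR:
  "(A + t *\<^sub>R B) $ i - (A + t *\<^sub>R B) $ j = (A $ i - A $ j) + t *\<^sub>R (B $ i - B $ j)"
  by (simp add: algebra_simps)

lemma column_diff_add_scaleR: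
  "column i (A + t *\<^sub>R B) - column j (A + t *\<^sub>R B)
     = (column i A - column j A) + t *\<^sub>R (column i B - column j B)"
  by (simp add: column_def vec_eq_iff algebra_simps)

lemma inner_proj_proj: "proj \<Theta> A \<bullet> proj \<Theta> B = proj \<Theta> A \<bullet> B"
  unfolding inner_vec_def by (intro sum.cong refl) (simp add: inner_vec_def)

lemma power2_norm_matrix: "(norm (A :: real^'n^'m))\<^sup>2 = (\<Sum>i\<in>UNIV. \<Sum>j\<in>UNIV. (A $ i $ j)\<^sup>2)"
  unfolding power2_norm_eq_inner by (simp add: inner_vec_def power2_eq_square)

lemma continuous_on_proj [continuous_intros]:
  assumes "continuous_on S A"
  shows "continuous_on S (\<lambda>x. proj \<Theta> (A x :: real^'n^'m))"
proof -
  have "continuous_on S (\<lambda>x. if (i, j) \<in> \<Theta> then A x $ i $ j else 0)" for i j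
    using assms by (cases "(i, j) \<in> \<Theta>") (auto intro!: continuous_intros)
  then show ?thesis unfolding proj_def by (intro continuous_intros)
qed

lemma continuous_on_column [continuous_intros]:
  "continuous_on S A \<Longrightarrow> continuous_on S (\<lambda>x. column i (A x :: real^'n^'m))"
  unfolding column_def by (intro continuous_intros)

lemma continuous_on_objective:
  assumes "continuous_on {0..} \<Omega>"
  shows "continuous_on UNIV (objective X \<Theta> \<gamma>r \<gamma>c Er Ec \<Omega>)"
  unfolding objective_def case_prod_beta
  by (intro continuous_intros continuous_on_compose2[OF assms]) auto

lemma continuous_on_surrogate:
  assumes "continuous_on {0..} d\<Omega>" "continuous_on S A" "continuous_on S B"
  shows "continuous_on S (\<lambda>x. surrogate X \<Theta> \<gamma>r \<gamma>c Er Ec d\<Omega> (A x) (B x))"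
  unfolding surrogate_def Let_def case_prod_beta
  by (intro continuous_intros continuous_on_compose2[OF assms(1)] assms(2,3)) auto

lemma objective_minus_surrogate:
  "objective X \<Theta> \<gamma>r \<gamma>c Er Ec \<Omega> W - surrogate X \<Theta> \<gamma>r \<gamma>c Er Ec d\<Omega> V W =
     (1/2) * ((norm (proj \<Theta> X - proj \<Theta> W))\<^sup>2 - (norm (proj \<Theta> X + proj (- \<Theta>) V - W))\<^sup>2)
   + \<gamma>r * (\<Sum>(i, j)\<in>Er. \<Omega> (norm (W $ i - W $ j)) - d\<Omega> (norm (V $ i - V $ j)) * norm (W $ i - W $ j))
   + \<gamma>c * (\<Sum>(i, j)\<in>Ec. \<Omega> (norm (column i W - column j W))
                         - d\<Omega> (norm (column i V - column j V)) * norm (column i W - column j W))"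
  by (simp add: objective_def surrogate_def Let_def case_prod_beta sum_subtractf algebra_simps)

lemma objective_minus_surrogate_le:
  assumes concave: "concave_on {0..} \<Omega>"
    and deriv: "\<And>x. 0 \<le> x \<Longrightarrow> (\<Omega> has_real_derivative d\<Omega> x) (at x within {0..})"
    and "\<gamma>r \<ge> 0" "\<gamma>c \<ge> 0"
  shows "objective X \<Theta> \<gamma>r \<gamma>c Er Ec \<Omega> W - surrogate X \<Theta> \<gamma>r \<gamma>c Er Ec d\<Omega> V W
       \<le> objective X \<Theta> \<gamma>r \<gamma>c Er Ec \<Omega> V - surrogate X \<Theta> \<gamma>r \<gamma>c Er Ec d\<Omega> V V"
proof -
  have tangent: "\<Omega> y - d\<Omega> x * y \<le> \<Omega> x - d\<Omega> x * x" if "0 \<le> x" "0 \<le> y" for x y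
    using concave_on_Ici_below_tangent[OF concave deriv that] by (simp add: algebra_simps)
  have data: "(norm (proj \<Theta> X - proj \<Theta> W))\<^sup>2 \<le> (norm (proj \<Theta> X + proj (- \<Theta>) V - W))\<^sup>2"
    unfolding power2_norm_matrix by (intro sum_mono) auto
  have data_at_V: "proj \<Theta> X - proj \<Theta> V = proj \<Theta> X + proj (- \<Theta>) V - V"
    by (simp add: vec_eq_iff)
  have rows: "(\<Sum>(i, j)\<in>Er. \<Omega> (norm (W $ i - W $ j)) - d\<Omega> (norm (V $ i - V $ j)) * norm (W $ i - W $ j))
      \<le> (\<Sum>(i, j)\<in>Er. \<Omega> (norm (V $ i - V $ j)) - d\<Omega> (norm (V $ i - V $ j)) * norm (V $ i - V $ j))"
    by (intro sum_mono) (auto intro: tangent)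
  have columns: "(\<Sum>(i, j)\<in>Ec. \<Omega> (norm (column i W - column j W))
                         - d\<Omega> (norm (column i V - column j V)) * norm (column i W - column j W))
      \<le> (\<Sum>(i, j)\<in>Ec. \<Omega> (norm (column i V - column j V))
                         - d\<Omega> (norm (column i V - column j V)) * norm (column i V - column j V))"
    by (intro sum_mono) (auto intro: tangent)
  show ?thesis
    unfolding objective_minus_surrogate data_at_V using data rows columns assms(3,4)
    by (intro add_mono mult_left_mono) auto
qed

definition objective_dir_deriv ::
  "real^'n^'m \<Rightarrow> ('m \<times> 'n) set \<Rightarrow> real \<Rightarrow> real \<Rightarrow> ('m \<times> 'm) set \<Rightarrow> ('n \<times> 'n) set
   \<Rightarrow> (real \<Rightarrow> real) \<Rightarrow> real^'n^'m \<Rightarrow> real^'n^'m \<Rightarrow> real" where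
  "objective_dir_deriv X \<Theta> \<gamma>r \<gamma>c Er Ec d\<Omega> L V =
     - (proj \<Theta> (X - L) \<bullet> V)
     + \<gamma>r * (\<Sum>(i, j)\<in>Er. d\<Omega> (norm (L $ i - L $ j)) * norm_dir_deriv (L $ i - L $ j) (V $ i - V $ j))
     + \<gamma>c * (\<Sum>(i, j)\<in>Ec. d\<Omega> (norm (column i L - column j L))
                         * norm_dir_deriv (column i L - column j L) (column i V - column j V))"

lemma has_dir_deriv_objective:
  fixes X L V :: "real^'n^'m"
  assumes deriv: "\<And>x. 0 \<le> x \<Longrightarrow> (\<Omega> has_real_derivative d\<Omega> x) (at x within {0..})"
  shows "has_dir_deriv (objective X \<Theta> \<gamma>r \<gamma>c Er Ec \<Omega>) L V (objective_dir_deriv X \<Theta> \<gamma>r \<gamma>c Er Ec d\<Omega> L V)"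
proof -
  have data: "proj \<Theta> X - proj \<Theta> (L + \<tau> *\<^sub>R V) = proj \<Theta> (X - L) - \<tau> *\<^sub>R proj \<Theta> V" for \<tau>
    by (simp add: vec_eq_iff)
  have "((\<lambda>\<tau>. (1/2) * (norm (proj \<Theta> (X - L) - \<tau> *\<^sub>R proj \<Theta> V))\<^sup>2) has_real_derivative
       - (proj \<Theta> (X - L) \<bullet> V)) (at 0 within {0..})"
    using has_real_derivative_half_norm_power2_line[of "proj \<Theta> (X - L)" "proj \<Theta> V"]
    by (simp add: inner_proj_proj)
  then show ?thesis
    unfolding has_dir_deriv_iff_has_real_derivative objective_def objective_dir_deriv_def
      data row_diff_add_scaleR column_diff_add_scaleR case_prod_beta
    by (intro DERIV_add DERIV_cmult DERIV_sum has_real_derivative_comp_norm_line deriv) auto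
qed

lemma has_dir_deriv_surrogate:
  fixes X L V :: "real^'n^'m"
  shows "has_dir_deriv (surrogate X \<Theta> \<gamma>r \<gamma>c Er Ec d\<Omega> L) L V (objective_dir_deriv X \<Theta> \<gamma>r \<gamma>c Er Ec d\<Omega> L V)"
proof -
  have data: "proj \<Theta> X + proj (- \<Theta>) L - (L + \<tau> *\<^sub>R V) = proj \<Theta> (X - L) - \<tau> *\<^sub>R V" for \<tau>
    by (simp add: vec_eq_iff)
  show ?thesis
    unfolding has_dir_deriv_iff_has_real_derivative surrogate_def Let_def objective_dir_deriv_def
      data row_diff_add_scaleR column_diff_add_scaleR case_prod_beta
    by (intro DERIV_add DERIV_cmult DERIV_sum has_real_derivative_half_norm_power2_line
        has_real_derivative_norm_line)
qed

definition clip :: "real \<Rightarrow> real^'n^'m \<Rightarrow> real^'n^'m" where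
  "clip M A = (\<chi> i j. max (- M) (min M (A $ i $ j)))"

lemma norm_clip_diff_le: "norm (clip M A $ i - clip M A $ j) \<le> norm (A $ i - A $ j)"
  by (rule norm_le_componentwise_cart) (auto simp: clip_def)

lemma norm_clip_column_diff_le:
  "norm (column i (clip M A) - column j (clip M A)) \<le> norm (column i A - column j A)"
  by (rule norm_le_componentwise_cart) (auto simp: clip_def column_def)

lemma norm_diff_clip_less:
  fixes Y A :: "real^'n^'m"
  assumes Y: "\<And>i j. \<bar>Y $ i $ j\<bar> \<le> M" and A: "\<bar>A $ k $ l\<bar> > M"
  shows "norm (Y - clip M A) < norm (Y - A)"
proof -
  have le: "\<bar>(Y - clip M A) $ i $ j\<bar> \<le> \<bar>(Y - A) $ i $ j\<bar>" for i j
    using Y[of i j] by (auto simp: clip_def)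
  have "\<bar>(Y - clip M A) $ k $ l\<bar> < \<bar>(Y - A) $ k $ l\<bar>"
    using Y[of k l] A by (auto simp: clip_def)
  then have less: "((Y - clip M A) $ k $ l)\<^sup>2 < ((Y - A) $ k $ l)\<^sup>2"
    by (metis abs_le_square_iff not_le)
  have "(norm (Y - clip M A))\<^sup>2 < (norm (Y - A))\<^sup>2"
    unfolding power2_norm_matrix
  proof (rule sum_strict_mono_ex1)
    show "\<forall>i\<in>UNIV. (\<Sum>j\<in>UNIV. ((Y - clip M A) $ i $ j)\<^sup>2) \<le> (\<Sum>j\<in>UNIV. ((Y - A) $ i $ j)\<^sup>2)"
      using le by (auto intro!: sum_mono simp: abs_le_square_iff)
    show "\<exists>i\<in>UNIV. (\<Sum>j\<in>UNIV. ((Y - clip M A) $ i $ j)\<^sup>2) < (\<Sum>j\<in>UNIV. ((Y - A) $ i $ j)\<^sup>2)"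
      using le less by (intro bexI[of _ k] sum_strict_mono_ex1) (auto simp: abs_le_square_iff)
  qed simp
  then show ?thesis by (rule power2_less_imp_less) simp
qed

lemma surrogate_clip_less:
  fixes X V A :: "real^'n^'m"
  assumes Y: "\<And>i j. \<bar>(proj \<Theta> X + proj (- \<Theta>) V) $ i $ j\<bar> \<le> M" and A: "\<bar>A $ k $ l\<bar> > M"
    and "\<gamma>r \<ge> 0" "\<gamma>c \<ge> 0" and weights: "\<And>x. 0 \<le> x \<Longrightarrow> 0 \<le> d\<Omega> x"
  shows "surrogate X \<Theta> \<gamma>r \<gamma>c Er Ec d\<Omega> V (clip M A) < surrogate X \<Theta> \<gamma>r \<gamma>c Er Ec d\<Omega> V A"
proof -
  have "norm (proj \<Theta> X + proj (- \<Theta>) V - clip M A) < norm (proj \<Theta> X + proj (- \<Theta>) V - A)"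
    using Y A by (rule norm_diff_clip_less)
  then have data: "(norm (proj \<Theta> X + proj (- \<Theta>) V - clip M A))\<^sup>2 < (norm (proj \<Theta> X + proj (- \<Theta>) V - A))\<^sup>2"
    by (rule power_strict_mono) auto
  have rows: "(\<Sum>(i, j)\<in>Er. d\<Omega> (norm (V $ i - V $ j)) * norm (clip M A $ i - clip M A $ j))
      \<le> (\<Sum>(i, j)\<in>Er. d\<Omega> (norm (V $ i - V $ j)) * norm (A $ i - A $ j))"
    by (intro sum_mono) (auto intro!: mult_left_mono norm_clip_diff_le weights)
  have columns: "(\<Sum>(i, j)\<in>Ec. d\<Omega> (norm (column i V - column j V)) * norm (column i (clip M A) - column j (clip M A)))
      \<le> (\<Sum>(i, j)\<in>Ec. d\<Omega> (norm (column i V - column j V)) * norm (column i A - column j A))"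
    by (intro sum_mono) (auto intro!: mult_left_mono norm_clip_column_diff_le weights)
  show ?thesis
    unfolding surrogate_def Let_def using data mult_left_mono[OF rows assms(3)] mult_left_mono[OF columns assms(4)]
    by linarith
qed

lemma bounded_entrywise: "bounded {A :: real^'n^'m. \<forall>i j. \<bar>A $ i $ j\<bar> \<le> M}"
  unfolding bounded_iff
proof (intro exI ballI)
  fix A :: "real^'n^'m" assume "A \<in> {A. \<forall>i j. \<bar>A $ i $ j\<bar> \<le> M}"
  then have "\<bar>A $ i $ j\<bar> \<le> M" for i j by simp
  then have "(\<Sum>i\<in>UNIV. norm (A $ i)) \<le> (\<Sum>i\<in>(UNIV::'m set). \<Sum>j\<in>(UNIV::'n set). M)"
    by (intro sum_mono order_trans[OF norm_le_l1_cart]) auto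
  moreover have "norm A \<le> (\<Sum>i\<in>UNIV. norm (A $ i))"
    unfolding norm_vec_def by (rule L2_set_le_sum) simp
  ultimately show "norm A \<le> (\<Sum>i\<in>(UNIV::'m set). \<Sum>j\<in>(UNIV::'n set). M)"
    by linarith
qed

lemma surrogate_iterates_bounded:
  fixes X :: "real^'n^'m" and U :: "nat \<Rightarrow> real^'n^'m"
  assumes "\<gamma>r \<ge> 0" "\<gamma>c \<ge> 0" "\<And>x. 0 \<le> x \<Longrightarrow> 0 \<le> d\<Omega> x"
    and step: "\<And>t W. surrogate X \<Theta> \<gamma>r \<gamma>c Er Ec d\<Omega> (U t) (U (Suc t)) \<le> surrogate X \<Theta> \<gamma>r \<gamma>c Er Ec d\<Omega> (U t) W"
  shows "bounded (range U)"
proof -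
  define M where "M = norm X + norm (U 0)"
  have entry: "\<bar>A $ i $ j\<bar> \<le> norm A" for A :: "real^'n^'m" and i j
    using component_le_norm_cart[of "A $ i" j] Finite_Cartesian_Product.norm_nth_le[of A i] by linarith
  have "\<bar>U t $ i $ j\<bar> \<le> M" for t i j
  proof (induction t arbitrary: i j)
    case 0
    show ?case using entry[of "U 0" i j] norm_ge_zero[of X] unfolding M_def by linarith
  next
    case (Suc t)
    have data: "\<bar>(proj \<Theta> X + proj (- \<Theta>) (U t)) $ i $ j\<bar> \<le> M" for i j
      using Suc.IH[of i j] entry[of X i j] unfolding M_def by (auto intro: add_increasing2)
    show ?case
    proof (rule ccontr)
      assume "\<not> \<bar>U (Suc t) $ i $ j\<bar> \<le> M"
      then have "surrogate X \<Theta> \<gamma>r \<gamma>c Er Ec d\<Omega> (U t) (clip M (U (Suc t)))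
                   < surrogate X \<Theta> \<gamma>r \<gamma>c Er Ec d\<Omega> (U t) (U (Suc t))"
        using data assms(1-3) by (intro surrogate_clip_less[where k=i and l=j]) auto
      with step[of t "clip M (U (Suc t))"] show False by simp
    qed
  qed
  then show ?thesis by (intro bounded_subset[OF bounded_entrywise]) auto
qed

theorem proposition1:
  fixes X :: "real^'n^'m"
    and \<Theta> :: "('m \<times> 'n) set"
    and \<gamma>r \<gamma>c :: real
    and Er :: "('m \<times> 'm) set" and Ec :: "('n \<times> 'n) set"
    and \<Omega> d\<Omega> :: "real \<Rightarrow> real"
    and U :: "nat \<Rightarrow> real^'n^'m"
  assumes "\<gamma>r \<ge> 0" and "\<gamma>c \<ge> 0"
    and conn_r: "\<forall>i j. i \<noteq> j \<longrightarrow> (i, j) \<in> Er\<^sup>+"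
    and conn_c: "\<forall>i j. i \<noteq> j \<longrightarrow> (i, j) \<in> Ec\<^sup>+"
    and nonneg: "\<forall>x\<ge>0. \<Omega> x \<ge> 0"
    and concave: "concave_on {0..} \<Omega>"
    and deriv: "\<forall>x\<ge>0. (\<Omega> has_real_derivative d\<Omega> x) (at x within {0..})"
    and cont_deriv: "continuous_on {0<..} d\<Omega>"
    and zero: "\<Omega> 0 = 0"
    and incr: "mono_on {0..} \<Omega>"
    and step: "\<forall>t W. surrogate X \<Theta> \<gamma>r \<gamma>c Er Ec d\<Omega> (U t) (U (Suc t))
                      \<le> surrogate X \<Theta> \<gamma>r \<gamma>c Er Ec d\<Omega> (U t) W"
  shows "(\<exists>L. limit_point U L) \<and>
         (\<forall>L. limit_point U L \<longrightarrow> stationary_point (objective X \<Theta> \<gamma>r \<gamma>c Er Ec \<Omega>) L)"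
proof -
  define f where "f = objective X \<Theta> \<gamma>r \<gamma>c Er Ec \<Omega>"
  define S where "S = surrogate X \<Theta> \<gamma>r \<gamma>c Er Ec d\<Omega>"
  have deriv': "\<And>x. 0 \<le> x \<Longrightarrow> (\<Omega> has_real_derivative d\<Omega> x) (at x within {0..})"
    using deriv by simp
  have weights: "\<And>x. 0 \<le> x \<Longrightarrow> 0 \<le> d\<Omega> x"
    using concave deriv' incr by (rule concave_on_Ici_deriv_nonneg)
  have "continuous_on {0..} \<Omega>" by (rule DERIV_continuous_on) (use deriv in auto)
  then have cont_f: "continuous_on UNIV f" unfolding f_def by (rule continuous_on_objective)
  have "continuous_on {0..} d\<Omega>"
    using concave deriv' cont_deriv by (rule concave_on_Ici_deriv_continuous_on)
  then have cont_S: "continuous_on UNIV (\<lambda>V. S V W)" "continuous_on UNIV (\<lambda>V. S V V)" for W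
    unfolding S_def by (auto intro!: continuous_on_surrogate continuous_intros)
  have major: "\<And>V W. f W - S V W \<le> f V - S V V"
    unfolding f_def S_def using concave deriv' assms(1,2) by (rule objective_minus_surrogate_le)
  have step': "\<And>t W. S (U t) (U (Suc t)) \<le> S (U t) W" using step unfolding S_def by blast
  have "bounded (range U)"
    using assms(1,2) weights step' unfolding S_def by (rule surrogate_iterates_bounded)
  then have "\<exists>L. limit_point U L"
    by (auto simp: limit_point_def dest: bounded_imp_convergent_subsequence)
  moreover have "stationary_point f L" if "limit_point U L" for L
  proof (rule stationary_point_if_tangent_surrogate_minimal)
    show "\<exists>d. has_dir_deriv f L V d \<and> has_dir_deriv (S L) L V d" for V
      unfolding f_def S_def using has_dir_deriv_objective[OF deriv'] has_dir_deriv_surrogate by blast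
    show "S L L \<le> S L W" for W
      using major step' cont_f cont_S that by (rule mm_limit_point_minimizes_surrogate)
  qed
  ultimately show ?thesis unfolding f_def by blast
qed

end
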